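(* For a fixed value of the sticky size $N$, the node potential $\phi_x$ of a node $x$ of a pairing heap is monotone nondecreasing in each of $|x_L|$ and $|x_R|$, the sizes of its left and right subtrees in the binary view.
   Context: A pairing heap is a heap-ordered rooted ordered tree; its binary view is the leftmost-child/right-sibling representation (left child in the binary view = leftmost child in the tree, right child in the binary view = next sibling to the right). For a node $x$, $x_L$ and $x_R$ denote its left and right children in the binary view, $|\cdot|$ denotes subtree size in the binary view (a missing child has size $0$), and $|x| = |x_L|+|x_R|+1$. $N \ge 1$ is the sticky size (a power of two) and $\lg=\log_2$. Node potential: if $|x_L| > \lg N$ and $|x_R| > \lg N$, $\phi_x = 400 + 100\lg|x|$; if $|x_L| \le \lg N < |x_R|$, $\phi_x = 400 + 100\frac{|x_L|}{\lg N}\lg|x|$; if $|x_R| \le \lg N < |x_L|$, $\phi_x = 400 + 100\frac{|x_R|}{\lg N}\lg|x|$; if $|x_L| \le \lg N$ and $|x_R| \le \lg N$, $\phi_x = 0$. *)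

theory Defs
  imports Complex_Main
begin

(* Node potential of a pairing-heap node x, as a function of the sticky size N,
   l = |x_L| and r = |x_R| (binary-view subtree sizes); |x| = l + r + 1. *)
definition node_pot :: "nat \<Rightarrow> nat \<Rightarrow> nat \<Rightarrow> real" where
  "node_pot N l r =
    (let lgN = log 2 (real N); sz = real (l + r + 1) in
     if real l > lgN \<and> real r > lgN then 400 + 100 * log 2 sz
     else if real l \<le> lgN \<and> lgN < real r then 400 + 100 * (real l / lgN) * log 2 sz
     else if real r \<le> lgN \<and> lgN < real l then 400 + 100 * (real r / lgN) * log 2 sz
     else 0)"

end

theory Submission
  imports Defs
begin

text \<open>Each of the four cases of the potential is \<open>400 + 100 w(|x\<^sub>L|) w(|x\<^sub>R|) lg |x|\<close>
  (or \<open>0\<close>) for the capped weight \<open>w(k) = min(1, k / lg N)\<close>, which is nondecreasing in \<open>k\<close>;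
  as \<open>lg |x|\<close> grows too and the zero case is the downward-closed region
  \<open>|x\<^sub>L|, |x\<^sub>R| \<le> lg N\<close>, monotonicity follows. The statement is symmetric in the two
  subtrees, so one argument suffices.\<close>

definition capped_weight :: "real \<Rightarrow> nat \<Rightarrow> real" where
  "capped_weight L k = (if real k > L then 1 else real k / L)"

lemma capped_weight_nonneg: "L \<ge> 0 \<Longrightarrow> capped_weight L k \<ge> 0"
  by (simp add: capped_weight_def)

lemma capped_weight_mono:
  assumes "L \<ge> 0" and "k \<le> k'"
  shows "capped_weight L k \<le> capped_weight L k'"
proof -
  have "real k / L \<le> 1" if "real k \<le> L"
    using that \<open>L \<ge> 0\<close> by (cases "L = 0") (auto simp: divide_le_eq_1)
  moreover have "real k / L \<le> real k' / L"
    using assms by (simp add: divide_right_mono)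
  ultimately show ?thesis
    using assms by (auto simp: capped_weight_def)
qed

lemma node_pot_capped_weight:
  "node_pot N l r =
    (let L = log 2 (real N) in
     if real l \<le> L \<and> real r \<le> L then 0
     else 400 + 100 * (capped_weight L l * capped_weight L r) * log 2 (real (l + r + 1)))"
  unfolding node_pot_def capped_weight_def Let_def by auto

lemma node_pot_commute: "node_pot N l r = node_pot N r l"
  unfolding node_pot_def Let_def by (auto simp: add.commute add.left_commute)

lemma node_pot_mono_left:
  assumes "N \<ge> 1" and "l \<le> l'"
  shows "node_pot N l r \<le> node_pot N l' r"
proof -
  define L where "L = log 2 (real N)"
  have "L \<ge> 0"
    using \<open>N \<ge> 1\<close> by (simp add: L_def)
  have weights: "capped_weight L l * capped_weight L r \<le> capped_weight L l' * capped_weight L r"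
    using capped_weight_mono[OF \<open>L \<ge> 0\<close> \<open>l \<le> l'\<close>] capped_weight_nonneg[OF \<open>L \<ge> 0\<close>]
    by (simp add: mult_right_mono)
  have size: "log 2 (real (l + r + 1)) \<le> log 2 (real (l' + r + 1))"
    using \<open>l \<le> l'\<close> by simp
  have "capped_weight L l * capped_weight L r * log 2 (real (l + r + 1))
        \<le> capped_weight L l' * capped_weight L r * log 2 (real (l' + r + 1))"
    by (rule mult_mono[OF weights size]) (simp_all add: capped_weight_nonneg \<open>L \<ge> 0\<close>)
  moreover have "0 \<le> capped_weight L l' * capped_weight L r * log 2 (real (l' + r + 1))"
    using capped_weight_nonneg[OF \<open>L \<ge> 0\<close>] by simp
  ultimately show ?thesis
    using \<open>l \<le> l'\<close> unfolding node_pot_capped_weight L_def[symmetric] Let_def by auto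
qed

theorem lemma3:
  fixes N :: nat
  assumes "N \<ge> 1" and "\<exists>k. N = 2 ^ k"
  shows "(\<forall>l l' r. l \<le> l' \<longrightarrow> node_pot N l r \<le> node_pot N l' r) \<and>
         (\<forall>l r r'. r \<le> r' \<longrightarrow> node_pot N l r \<le> node_pot N l r')"
  using node_pot_mono_left[OF \<open>N \<ge> 1\<close>] node_pot_commute by metis

end
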